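(* Let $N\geq 2$, and let $f:\{0,1\}^N\to\{0,1\}$ be a total function. Then \[\mathrm{H}(\mathrm{C}_f)\leq 10\mathrm{Bal}(f)\log N.\]
   Context: $\mathrm{C}_f(x)$ is the certificate complexity of $f$ at $x$. For $g:\{0,1\}^N\to[0,\infty)$, the H-index $\mathrm{H}(g)$ is the maximum $h$ such that at least $2^h$ inputs satisfy $g(x)\geq h$ (equivalently, the minimum $h$ such that at most $2^h$ inputs satisfy $g(x)>h$). $\mathrm{Bal}(f)$ is $0$ if $f$ is constant, and otherwise $\min\{1+\log|f^{-1}(0)|,\,1+\log|f^{-1}(1)|\}$ (log base 2). *)

theory Defs
  imports Complex_Main
begin

text \<open>The Boolean cube {0,1}^N, represented as bit-vectors nat => bool that are
  False outside the coordinates 0..N-1.\<close>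
definition cube :: "nat \<Rightarrow> (nat \<Rightarrow> bool) set" where
  "cube N = {x. \<forall>i\<ge>N. x i = False}"

definition cert :: "nat \<Rightarrow> ((nat \<Rightarrow> bool) \<Rightarrow> bool) \<Rightarrow> (nat \<Rightarrow> bool) \<Rightarrow> nat" where
  "cert N f x = (LEAST k. \<exists>S. S \<subseteq> {..<N} \<and> card S = k \<and>
      (\<forall>y\<in>cube N. (\<forall>i\<in>S. y i = x i) \<longrightarrow> f y = f x))"

text \<open>H-index of g : {0,1}^N -> [0,inf): the maximum h with at least 2^h inputs
  satisfying g x >= h (the maximum exists; we write it as a supremum).\<close>
definition Hindex :: "nat \<Rightarrow> ((nat \<Rightarrow> bool) \<Rightarrow> real) \<Rightarrow> real" where
  "Hindex N g = Sup {h::real. 2 powr h \<le> real (card {x\<in>cube N. g x \<ge> h})}"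

definition Bal :: "nat \<Rightarrow> ((nat \<Rightarrow> bool) \<Rightarrow> bool) \<Rightarrow> real" where
  "Bal N f = (if (\<forall>x\<in>cube N. \<forall>y\<in>cube N. f x = f y) then 0
     else min (1 + log 2 (real (card {x\<in>cube N. f x = False})))
              (1 + log 2 (real (card {x\<in>cube N. f x = True}))))"

end

theory Submission
  imports Defs "HOL-Library.Log_Nat"
begin

text \<open>Fix a value b and let Y be the set of inputs with f y = b, of size m.
  An input x with f x \<noteq> b and certificate complexity greater than k is matched on
  every set of at most k coordinates by some element of Y. If m < 2^k there are at
  most (N+1)^k such inputs: either x is the coordinatewise majority of Y, or x
  differs from it at some coordinate i, and then x stays matched, with budget k - 1,
  by the at most m/2 elements of Y lying in the minority at i. Taking k = floorlog 2 m
  gives at most m + (N+1)^k \<le> N^(3k) inputs of certificate complexity above k,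
  hence H(C_f) \<le> 3 (1 + log m) log N for both values b.\<close>

lemma cube_subset_image_Pow: "cube N \<subseteq> (\<lambda>S i. i \<in> S) ` Pow {..<N}"
proof
  fix x assume "x \<in> cube N"
  hence "x = (\<lambda>i. i \<in> {i. i < N \<and> x i})" by (auto simp: cube_def) (metis not_le)
  thus "x \<in> (\<lambda>S i. i \<in> S) ` Pow {..<N}" by blast
qed

lemma finite_cube: "finite (cube N)"
  using cube_subset_image_Pow finite_subset by blast

lemma cube_nonempty: "cube N \<noteq> {}"
  by (auto simp: cube_def)

lemma cert_le_card:
  assumes "S \<subseteq> {..<N}" and "\<forall>y\<in>cube N. (\<forall>i\<in>S. y i = x i) \<longrightarrow> f y = f x"
  shows "cert N f x \<le> card S"
  unfolding cert_def by (rule Least_le) (use assms in blast)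

lemma cert_eq_0_if_const:
  assumes "\<forall>x\<in>cube N. \<forall>y\<in>cube N. f x = f y" and "x \<in> cube N"
  shows "cert N f x = 0"
proof -
  have "cert N f x \<le> card ({} :: nat set)"
    by (rule cert_le_card) (use assms in blast)+
  thus ?thesis by simp
qed

definition unseparated :: "nat \<Rightarrow> nat \<Rightarrow> (nat \<Rightarrow> bool) set \<Rightarrow> (nat \<Rightarrow> bool) set" where
  "unseparated N k Y =
     {x \<in> cube N. \<forall>S. S \<subseteq> {..<N} \<and> card S \<le> k \<longrightarrow> (\<exists>y\<in>Y. \<forall>i\<in>S. y i = x i)}"

definition majority :: "nat \<Rightarrow> (nat \<Rightarrow> bool) set \<Rightarrow> nat \<Rightarrow> bool" where
  "majority N Y i \<longleftrightarrow> i < N \<and> card Y < 2 * card {y\<in>Y. y i}"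

lemma finite_unseparated: "finite (unseparated N k Y)"
  using finite_cube by (rule rev_finite_subset) (auto simp: unseparated_def)

lemma unseparated_0_empty: "unseparated N 0 {} = {}"
  unfolding unseparated_def by (auto dest: spec[of _ "{}"])

lemma card_minority_le_half:
  assumes "finite Y" and "i < N"
  shows "2 * card {y\<in>Y. y i \<noteq> majority N Y i} \<le> card Y"
proof (cases "majority N Y i")
  case True
  have "{y\<in>Y. y i \<noteq> majority N Y i} = Y - {y\<in>Y. y i}" using True by auto
  moreover have "card (Y - {y\<in>Y. y i}) = card Y - card {y\<in>Y. y i}"
    using assms(1) by (intro card_Diff_subset) auto
  moreover have "card {y\<in>Y. y i} \<le> card Y" using assms(1) by (intro card_mono) auto
  ultimately show ?thesis using True by (simp add: majority_def) arith
next
  case False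
  hence "{y\<in>Y. y i \<noteq> majority N Y i} = {y\<in>Y. y i}" by auto
  thus ?thesis using False assms(2) by (simp add: majority_def)
qed

lemma unseparated_Suc_subset:
  "unseparated N (Suc k) Y \<subseteq>
     insert (majority N Y) (\<Union>i<N. unseparated N k {y\<in>Y. y i \<noteq> majority N Y i})"
proof
  fix x assume x: "x \<in> unseparated N (Suc k) Y"
  hence x_cube: "x \<in> cube N" by (simp add: unseparated_def)
  show "x \<in> insert (majority N Y) (\<Union>i<N. unseparated N k {y\<in>Y. y i \<noteq> majority N Y i})"
  proof (cases "x = majority N Y")
    case False
    then obtain i where xi: "x i \<noteq> majority N Y i" by auto
    have "i < N"
      using xi x_cube by (simp add: cube_def majority_def) (meson not_le)
    have "x \<in> unseparated N k {y\<in>Y. y i \<noteq> majority N Y i}"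
      unfolding unseparated_def
    proof (intro CollectI conjI allI impI x_cube)
      fix S assume S: "S \<subseteq> {..<N} \<and> card S \<le> k"
      hence "insert i S \<subseteq> {..<N} \<and> card (insert i S) \<le> Suc k"
        using \<open>i < N\<close> finite_subset[of S "{..<N}"] by (auto simp: card_insert_if)
      then obtain y where "y \<in> Y" "\<forall>j\<in>insert i S. y j = x j"
        using x unfolding unseparated_def by blast
      thus "\<exists>y\<in>{y\<in>Y. y i \<noteq> majority N Y i}. \<forall>j\<in>S. y j = x j" using xi by auto
    qed
    thus ?thesis using \<open>i < N\<close> by blast
  qed simp
qed

lemma card_unseparated_le:
  assumes "finite Y" and "card Y < 2 ^ k"
  shows "card (unseparated N k Y) \<le> (N + 1) ^ k"
  using assms
proof (induction k arbitrary: Y)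
  case 0
  thus ?case by (simp add: unseparated_0_empty)
next
  case (Suc k)
  let ?Y = "\<lambda>i. {y\<in>Y. y i \<noteq> majority N Y i}"
  have IH: "card (unseparated N k (?Y i)) \<le> (N + 1) ^ k" if "i < N" for i
    using Suc.IH[of "?Y i"] card_minority_le_half[OF Suc.prems(1) that] Suc.prems by simp
  have "card (unseparated N (Suc k) Y) \<le> card (insert (majority N Y) (\<Union>i<N. unseparated N k (?Y i)))"
    by (rule card_mono[OF _ unseparated_Suc_subset]) (simp add: finite_unseparated)
  also have "\<dots> \<le> Suc (card (\<Union>i<N. unseparated N k (?Y i)))"
    by (simp add: card_insert_if finite_unseparated)
  also have "card (\<Union>i<N. unseparated N k (?Y i)) \<le> (\<Sum>i<N. card (unseparated N k (?Y i)))"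
    by (rule card_UN_le) simp
  also have "\<dots> \<le> N * (N + 1) ^ k"
    using sum_mono[of "{..<N}" "\<lambda>i. card (unseparated N k (?Y i))" "\<lambda>_. (N + 1) ^ k"] IH
    by simp
  finally have "card (unseparated N (Suc k) Y) \<le> Suc (N * (N + 1) ^ k)" by simp
  moreover have "(N + 1) ^ Suc k = (N + 1) ^ k + N * (N + 1) ^ k" by simp
  moreover have "1 \<le> (N + 1) ^ k" by simp
  ultimately show ?case by linarith
qed

lemma cert_gt_imp_unseparated:
  assumes "x \<in> cube N" and "f x \<noteq> b" and "k < cert N f x"
  shows "x \<in> unseparated N k {y\<in>cube N. f y = b}"
  unfolding unseparated_def
proof (intro CollectI conjI allI impI assms(1))
  fix S assume S: "S \<subseteq> {..<N} \<and> card S \<le> k"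
  show "\<exists>y\<in>{y\<in>cube N. f y = b}. \<forall>i\<in>S. y i = x i"
  proof (rule ccontr)
    assume "\<not> ?thesis"
    hence "cert N f x \<le> card S"
      using S assms(2) by (intro cert_le_card) auto
    thus False using S assms(3) by simp
  qed
qed

lemma card_cert_gt_le:
  assumes "card {y\<in>cube N. f y = b} < 2 ^ k"
  shows "card {x\<in>cube N. k < cert N f x} \<le> card {y\<in>cube N. f y = b} + (N + 1) ^ k"
proof -
  let ?Y = "{y\<in>cube N. f y = b}"
  have "{x\<in>cube N. k < cert N f x} \<subseteq> ?Y \<union> unseparated N k ?Y"
    using cert_gt_imp_unseparated by blast
  hence "card {x\<in>cube N. k < cert N f x} \<le> card (?Y \<union> unseparated N k ?Y)"
    by (intro card_mono) (simp_all add: finite_cube finite_unseparated)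
  also have "\<dots> \<le> card ?Y + card (unseparated N k ?Y)" by (rule card_Un_le)
  also have "\<dots> \<le> card ?Y + (N + 1) ^ k"
    using card_unseparated_le[OF _ assms] finite_cube by simp
  finally show ?thesis .
qed

lemma add_power_Suc_le_power_mult_3:
  fixes m N k :: nat
  assumes "2 \<le> N" and "1 \<le> k" and "m < 2 ^ k"
  shows "m + (N + 1) ^ k \<le> N ^ (3 * k)"
proof -
  have "2 ^ k \<le> (N + 1) ^ k" using assms(1) by (intro power_mono) auto
  hence "m + (N + 1) ^ k \<le> 2 * (N + 1) ^ k" using assms(3) by simp
  also have "\<dots> \<le> N ^ k * (N ^ 2) ^ k"
  proof (rule mult_mono)
    show "2 \<le> N ^ k" using assms(1,2) order.trans[OF _ power_increasing[of 1 k N]] by simp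
    have "2 * N \<le> N * N" by (rule mult_le_mono1[OF assms(1)])
    hence "N + 1 \<le> N ^ 2" using assms(1) unfolding power2_eq_square by linarith
    thus "(N + 1) ^ k \<le> (N ^ 2) ^ k" by (rule power_mono) simp
  qed simp_all
  also have "\<dots> = N ^ (3 * k)" by (simp flip: power_mult power_add)
  finally show ?thesis .
qed

lemma cert_superlevel_le_fiber:
  assumes "2 \<le> N" and "f y = b" and "y \<in> cube N"
    and "2 powr h \<le> real (card {x\<in>cube N. h \<le> real (cert N f x)})"
  shows "h \<le> 3 * (1 + log 2 (card {y\<in>cube N. f y = b})) * log 2 N"
proof -
  define m where "m = card {y\<in>cube N. f y = b}"
  define k where "k = floorlog 2 m"
  have "0 < m" using assms(2,3) finite_cube by (auto simp: m_def card_gt_0_iff)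
  hence "m < 2 ^ k" "1 \<le> k" using floorlog_bounds[of m 2] by (simp_all add: k_def floorlog_def)
  have k_le: "real k \<le> 1 + log 2 m"
    using \<open>0 < m\<close> by (simp add: k_def floorlog_def)
  have log_N: "1 \<le> log 2 N" using assms(1) by simp
  have "h \<le> 3 * k * log 2 N"
  proof (cases "h \<le> k")
    case True
    moreover have "real k \<le> 3 * k * log 2 N"
      using mult_left_mono[OF log_N, of "3 * real k"] by simp
    ultimately show ?thesis by linarith
  next
    case False
    hence "card {x\<in>cube N. h \<le> real (cert N f x)} \<le> card {x\<in>cube N. k < cert N f x}"
      by (intro card_mono) (auto simp: finite_cube)
    also have "\<dots> \<le> m + (N + 1) ^ k"
      using card_cert_gt_le[of N f b k] \<open>m < 2 ^ k\<close> by (simp only: m_def)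
    also have "\<dots> \<le> N ^ (3 * k)"
      by (rule add_power_Suc_le_power_mult_3[OF assms(1) \<open>1 \<le> k\<close> \<open>m < 2 ^ k\<close>])
    finally have "2 powr h \<le> real N ^ (3 * k)"
      using assms(4) by (metis of_nat_le_iff of_nat_power order.trans)
    also have "\<dots> = (2 powr log 2 N) powr (3 * k)"
      using assms(1) powr_realpow[of "real N" "3 * k"] by simp
    also have "\<dots> = 2 powr (3 * k * log 2 N)"
      by (simp add: powr_powr mult.commute)
    finally show ?thesis by simp
  qed
  also have "\<dots> \<le> 3 * (1 + log 2 m) * log 2 N"
    using k_le log_N by (intro mult_right_mono) auto
  finally show ?thesis by (simp only: m_def)
qed

lemma card_fiber_pos:
  fixes f :: "(nat \<Rightarrow> bool) \<Rightarrow> bool"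
  assumes "x \<in> cube N" and "y \<in> cube N" and "f x \<noteq> f y"
  shows "0 < card {z\<in>cube N. f z = b}"
proof -
  have "x \<in> {z\<in>cube N. f z = b} \<or> y \<in> {z\<in>cube N. f z = b}"
    using assms by (cases b) auto
  thus ?thesis using finite_cube by (auto simp: card_gt_0_iff)
qed

lemma Bal_nonneg: "0 \<le> Bal N f"
proof (cases "\<forall>x\<in>cube N. \<forall>y\<in>cube N. f x = f y")
  case True
  show ?thesis unfolding Bal_def if_P[OF True] ..
next
  case False
  then obtain x y where xy: "x \<in> cube N" "y \<in> cube N" "f x \<noteq> f y" by blast
  have log_fiber: "0 \<le> log 2 (card {z\<in>cube N. f z = b})" for b
    using card_fiber_pos[OF xy, of b] by simp
  show ?thesis unfolding Bal_def if_not_P[OF False]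
    using log_fiber[of False] log_fiber[of True] by (simp add: min_def)
qed

lemma cert_superlevel_le_Bal:
  assumes "2 \<le> N" and "2 powr h \<le> real (card {x\<in>cube N. h \<le> real (cert N f x)})"
  shows "h \<le> 3 * Bal N f * log 2 N"
proof (cases "\<forall>x\<in>cube N. \<forall>y\<in>cube N. f x = f y")
  case True
  have "h \<le> 0"
  proof (rule ccontr)
    assume "\<not> h \<le> 0"
    hence "{x\<in>cube N. h \<le> real (cert N f x)} = {}" using cert_eq_0_if_const[OF True] by auto
    hence "card {x\<in>cube N. h \<le> real (cert N f x)} = 0" by (simp only: card.empty)
    thus False using assms(2) by simp
  qed
  moreover have "Bal N f = 0" unfolding Bal_def by (rule if_P[OF True])
  ultimately show ?thesis by simp
next
  case False
  then obtain x y where xy: "x \<in> cube N" "y \<in> cube N" "f x \<noteq> f y" by blast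
  have fiber: "h \<le> 3 * (1 + log 2 (card {z\<in>cube N. f z = b})) * log 2 N" for b
  proof -
    obtain z where "z \<in> cube N" "f z = b"
      using card_fiber_pos[OF xy, of b] by (force simp: card_gt_0_iff)
    thus ?thesis using cert_superlevel_le_fiber[OF assms(1) _ _ assms(2)] by blast
  qed
  have "Bal N f = 1 + log 2 (card {z\<in>cube N. f z = False}) \<or>
        Bal N f = 1 + log 2 (card {z\<in>cube N. f z = True})"
    unfolding Bal_def if_not_P[OF False] min_def by simp
  thus ?thesis by (elim disjE) (simp_all only: fiber)
qed

lemma Hindex_le:
  assumes "\<And>x. 0 \<le> g x"
    and "\<And>h. 2 powr h \<le> real (card {x\<in>cube N. h \<le> g x}) \<Longrightarrow> h \<le> c"
  shows "Hindex N g \<le> c"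
proof -
  have "card {x\<in>cube N. 0 \<le> g x} = card (cube N)" using assms(1) by simp
  hence "0 \<in> {h. 2 powr h \<le> real (card {x\<in>cube N. h \<le> g x})}"
    using cube_nonempty finite_cube by (simp add: Suc_le_eq card_gt_0_iff)
  hence "{h. 2 powr h \<le> real (card {x\<in>cube N. h \<le> g x})} \<noteq> {}" by blast
  thus ?thesis unfolding Hindex_def by (rule cSup_least) (use assms(2) in blast)
qed

theorem theorem22:
  fixes N :: nat and f :: "(nat \<Rightarrow> bool) \<Rightarrow> bool"
  assumes "N \<ge> 2"
  shows "Hindex N (\<lambda>x. real (cert N f x)) \<le> 10 * Bal N f * log 2 (real N)"
proof -
  have "Hindex N (\<lambda>x. real (cert N f x)) \<le> 3 * Bal N f * log 2 N"
    using cert_superlevel_le_Bal[OF assms] by (intro Hindex_le) auto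
  also have "\<dots> \<le> 10 * Bal N f * log 2 N"
    using Bal_nonneg[of N f] assms by (intro mult_right_mono) auto
  finally show ?thesis .
qed

end
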